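(* $$\sum_{i,j,k\ge0}\frac{q^{i^2+j^2+k^2}}{(q)_{i+j-k}(q)_{i+k-j}(q)_{j+k-i}}=\frac12(-\sqrt q;q)_\infty\sum_{i\ge0}\frac{(-\sqrt q;q)_i\,q^{\frac32 i^2}}{(q)_{2i}}+\frac12(\sqrt q;q)_\infty\sum_{i\ge0}\frac{(\sqrt q;q)_i\,q^{\frac32 i^2}(-1)^i}{(q)_{2i}}.$$
   Context: $0<q<1$, $\sqrt q=q^{1/2}$. $(a;q)_n=\prod_{j=0}^{n-1}(1-aq^j)$ for $n\ge 0$, $(a;q)_\infty=\lim_{n\to\infty}(a;q)_n$, $(q)_n=(q;q)_n$, and $1/(q)_n:=0$ for $n<0$. *)

theory Defs
  imports "HOL-Analysis.Analysis"
begin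

definition qpoch :: "real \<Rightarrow> real \<Rightarrow> nat \<Rightarrow> real" where
  "qpoch a q n = (\<Prod>j<n. (1 - a * q ^ j))"

definition qpoch_inf :: "real \<Rightarrow> real \<Rightarrow> real" where
  "qpoch_inf a q = lim (\<lambda>n. qpoch a q n)"

text \<open>1/(q)_n for integer n, with the convention 1/(q)_n = 0 for n < 0.\<close>
definition qinv :: "real \<Rightarrow> int \<Rightarrow> real" where
  "qinv q n = (if n < 0 then 0 else 1 / qpoch q q (nat n))"

end

theory Submission
  imports Defs
begin

(* Write y = +-sqrt q and reparametrise the triple (i,j,k) by
   a = i+j-k and c = j+k-i, so that i+k-j = 2i-a. The triangle conditions
   under which all three factors 1/(q)_n are nonzero become a <= 2i and
   a+c even, and 2(i^2+j^2+k^2) = E(i,a,c), where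
     E(i,a,c) = a^2 + (2i-a)^2 + a(2i-a) + c^2 + 2ic.
   Put w_y(i,a,c) = y^E / ((q)_a (q)_(2i-a) (q)_c) for all a <= 2i.
   Since E has the parity of a+c, the average (w_y + w_(-y))/2 is w_y on the
   even part and 0 elsewhere, so the triple sum equals
   (Sum w_(sqrt q) + Sum w_(-sqrt q)) / 2.
   Each Sum w_y is evaluated iteratively:
   - over c by Euler's identity Sum q^(c(c-1)/2) z^c / (q)_c = (-z;q)_inf
     with z = y q^i;
   - over a <= 2i by the q-binomial theorem, which gives
     y^(3i^2) (-y;q)_i^2 / (q)_(2i);
   - and (-y;q)_i (-y q^i;q)_inf = (-y;q)_inf.
   Absolute convergence, i.e. the same computation for |y|, justifies the
   rearrangements. *)

definition tri :: "nat \<Rightarrow> nat" where "tri n = n * (n - 1) div 2"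

lemma tri_0 [simp]: "tri 0 = 0" by (simp add: tri_def)

lemma tri_Suc [simp]: "tri (Suc n) = tri n + n"
proof -
  have "Suc n * n = n * (n - 1) + 2 * n" by (cases n) (auto simp: algebra_simps)
  moreover have "even (n * (n - 1))" by (cases n) auto
  ultimately show ?thesis unfolding tri_def by (auto elim!: evenE)
qed

lemma tri_double: "2 * tri n + n = n\<^sup>2"
  by (induction n) (auto simp: power2_eq_square algebra_simps)

(* q^(n(n-1)/2) beats every geometric growth; this gives all convergence bounds. *)
lemma summable_tri_geom:
  fixes q r :: real
  assumes q: "0 < q" "q < 1" and r: "0 \<le> r"
  shows "summable (\<lambda>n. q ^ tri n * r ^ n)"
proof -
  have "(\<lambda>n. q ^ n * r) \<longlonglongrightarrow> 0 * r"
    by (intro tendsto_mult tendsto_const LIMSEQ_power_zero) (use q in auto)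
  then have "eventually (\<lambda>n. q ^ n * r < 1/2) sequentially"
    by (intro order_tendstoD) auto
  then obtain N where N: "\<And>n. n \<ge> N \<Longrightarrow> q ^ n * r < 1/2"
    by (auto simp: eventually_sequentially)
  show ?thesis
  proof (rule summable_ratio_test[of "1/2" N])
    fix n assume "n \<ge> N"
    have "norm (q ^ tri (Suc n) * r ^ Suc n) = (q ^ n * r) * (q ^ tri n * r ^ n)"
      using q r by (simp add: power_add abs_mult)
    also have "\<dots> \<le> 1/2 * (q ^ tri n * r ^ n)"
      using N[OF \<open>n \<ge> N\<close>] q r by (intro mult_right_mono) auto
    also have "\<dots> = 1/2 * norm (q ^ tri n * r ^ n)" using q r by simp
    finally show "norm (q ^ tri (Suc n) * r ^ Suc n) \<le> 1/2 * norm (q ^ tri n * r ^ n)" .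
  qed auto
qed

lemma qpoch_0 [simp]: "qpoch a q 0 = 1" by (simp add: qpoch_def)

lemma qpoch_Suc: "qpoch a q (Suc n) = qpoch a q n * (1 - a * q ^ n)"
  by (simp add: qpoch_def)

lemma qpoch_qq_lower:
  assumes "0 < q" "q < 1"
  shows "(1 - q) ^ n \<le> qpoch q q n"
  unfolding qpoch_def
proof -
  have "(\<Prod>j<n. (1 - q)) \<le> (\<Prod>j<n. (1 - q * q ^ j))"
  proof (rule prod_mono)
    fix j assume "j \<in> {..<n}"
    have "q * q ^ j \<le> q * 1" using assms by (intro mult_left_mono power_le_one) auto
    then show "0 \<le> 1 - q \<and> 1 - q \<le> 1 - q * q ^ j" using assms by auto
  qed
  then show "(1 - q) ^ n \<le> (\<Prod>j<n. (1 - q * q ^ j))" by simp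
qed

lemma qpoch_qq_pos:
  assumes "0 < q" "q < 1"
  shows "0 < qpoch q q n"
  using qpoch_qq_lower[OF assms, of n] assms
  by (meson less_le_trans zero_less_power diff_gt_0_iff_gt)

(* Euler's identity Sum_n q^(n(n-1)/2) z^n / (q)_n = (-z;q)_inf for |z| <= 1.
   The series F(z) satisfies F(z) = (1+z) F(qz); iterating, (-z;q)_n = F(z)/F(q^n z),
   which tends to F(z) because F is continuous with F(0) = 1. *)

definition euler_coeff :: "real \<Rightarrow> nat \<Rightarrow> real" where
  "euler_coeff q n = q ^ tri n / qpoch q q n"

definition euler_series :: "real \<Rightarrow> real \<Rightarrow> real" where
  "euler_series q z = (\<Sum>n. euler_coeff q n * z ^ n)"

lemma euler_term_bound:
  assumes q: "0 < q" "q < 1" and z: "\<bar>z\<bar> \<le> 1"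
  shows "norm (euler_coeff q n * z ^ n) \<le> q ^ tri n * (1 / (1 - q)) ^ n"
proof -
  have P: "0 < qpoch q q n" using qpoch_qq_pos[OF q] .
  have "norm (euler_coeff q n * z ^ n) = q ^ tri n / qpoch q q n * \<bar>z\<bar> ^ n"
    using P q by (simp add: euler_coeff_def abs_mult power_abs)
  also have "\<dots> \<le> q ^ tri n / qpoch q q n * 1"
    using P q z by (intro mult_left_mono power_le_one) auto
  also have "\<dots> \<le> q ^ tri n / (1 - q) ^ n"
    using P q qpoch_qq_lower[OF q, of n] by (simp only: mult_1_right, intro divide_left_mono) auto
  also have "\<dots> = q ^ tri n * (1 / (1 - q)) ^ n" by (simp add: power_divide)
  finally show ?thesis .
qed

lemma euler_summable_norm:
  assumes q: "0 < q" "q < 1" and z: "\<bar>z\<bar> \<le> 1"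
  shows "summable (\<lambda>n. norm (euler_coeff q n * z ^ n))"
  by (rule summable_comparison_test[OF _ summable_tri_geom[OF q, of "1/(1-q)"]])
     (use euler_term_bound[OF q z] q in auto)

lemma euler_sums:
  assumes q: "0 < q" "q < 1" and z: "\<bar>z\<bar> \<le> 1"
  shows "(\<lambda>n. euler_coeff q n * z ^ n) sums euler_series q z"
  unfolding euler_series_def using summable_norm_cancel[OF euler_summable_norm[OF q z]]
  by (simp add: summable_sums)

(* The coefficients satisfy c_(m+1) (1 - q^(m+1)) = q^m c_m. *)
lemma euler_series_funeq:
  assumes q: "0 < q" "q < 1" and z: "\<bar>z\<bar> \<le> 1"
  shows "euler_series q z = (1 + z) * euler_series q (q * z)"
proof -
  let ?F = "euler_series q" and ?c = "euler_coeff q"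
  have z': "\<bar>q * z\<bar> \<le> 1" using q z by (simp add: abs_mult mult_le_one)
  have step: "?c (Suc m) * z ^ Suc m - ?c (Suc m) * (q * z) ^ Suc m = z * (?c m * (q * z) ^ m)" for m
  proof -
    have "qpoch q q m \<noteq> 0" "1 - q * q ^ m \<noteq> 0"
      using qpoch_qq_pos[OF q, of m] power_Suc_less_one[OF q, of m] by auto
    then have e: "?c (Suc m) * (1 - q * q ^ m) = q ^ m * ?c m"
      by (simp add: euler_coeff_def qpoch_Suc power_add)
    have "?c (Suc m) * z ^ Suc m - ?c (Suc m) * (q * z) ^ Suc m
        = (?c (Suc m) * (1 - q * q ^ m)) * z * z ^ m"
      by (simp add: power_mult_distrib algebra_simps)
    also have "\<dots> = z * (?c m * (q * z) ^ m)" by (simp only: e) (simp add: power_mult_distrib)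
    finally show ?thesis .
  qed
  have "(\<lambda>m. ?c (Suc m) * z ^ Suc m - ?c (Suc m) * (q * z) ^ Suc m) sums (z * ?F (q * z))"
    unfolding step by (intro sums_mult euler_sums q z')
  then have "(\<lambda>n. ?c n * z ^ n - ?c n * (q * z) ^ n) sums (z * ?F (q * z) + 0)"
    by (subst (asm) sums_Suc_iff) simp
  moreover have "(\<lambda>n. ?c n * z ^ n - ?c n * (q * z) ^ n) sums (?F z - ?F (q * z))"
    by (intro sums_diff euler_sums q z z')
  ultimately have "?F z - ?F (q * z) = z * ?F (q * z)" by (simp add: sums_unique2)
  then show ?thesis by (simp add: algebra_simps)
qed

lemma euler_series_iter:
  assumes q: "0 < q" "q < 1" and z: "\<bar>z\<bar> \<le> 1"
  shows "euler_series q z = qpoch (- z) q n * euler_series q (q ^ n * z)"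
proof (induction n)
  case (Suc n)
  have "\<bar>q ^ n * z\<bar> \<le> 1" using q z by (simp add: abs_mult mult_le_one power_le_one)
  then show ?case using Suc euler_series_funeq[OF q]
    by (simp add: qpoch_Suc algebra_simps)
qed simp

lemma qpoch_inf_eq_euler_series:
  assumes q: "0 < q" "q < 1" and z: "\<bar>z\<bar> \<le> 1"
  shows "qpoch_inf (- z) q = euler_series q z"
proof -
  let ?F = "euler_series q"
  have "isCont ?F 0"
  proof -
    have "summable (\<lambda>n. euler_coeff q n * 1 ^ n)"
      using summable_norm_cancel[OF euler_summable_norm[OF q, of 1]] by simp
    from isCont_powser[OF this, of 0] show ?thesis unfolding euler_series_def[abs_def] by simp
  qed
  moreover have "(\<lambda>n. q ^ n * z) \<longlonglongrightarrow> 0"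
    using tendsto_mult_left_zero[OF LIMSEQ_power_zero[of q]] q by simp
  ultimately have "(\<lambda>n. ?F (q ^ n * z)) \<longlonglongrightarrow> ?F 0"
    using isCont_tendsto_compose by blast
  moreover have "?F 0 = 1"
    unfolding euler_series_def using powser_zero[of "euler_coeff q"] by (simp add: euler_coeff_def)
  ultimately have lim: "(\<lambda>n. ?F (q ^ n * z)) \<longlonglongrightarrow> 1" by simp
  then have "eventually (\<lambda>n. ?F (q ^ n * z) \<noteq> 0) sequentially"
    by (rule tendsto_imp_eventually_ne) simp
  then have "eventually (\<lambda>n. ?F z / ?F (q ^ n * z) = qpoch (- z) q n) sequentially"
    by eventually_elim (subst euler_series_iter[OF q z, of n], simp)
  moreover have "(\<lambda>n. ?F z / ?F (q ^ n * z)) \<longlonglongrightarrow> ?F z / 1"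
    by (intro tendsto_divide tendsto_const lim) simp
  ultimately have "(\<lambda>n. qpoch (- z) q n) \<longlonglongrightarrow> ?F z"
    using Lim_transform_eventually by fastforce
  then show ?thesis unfolding qpoch_inf_def by (rule limI)
qed

lemma euler_has_sum:
  assumes q: "0 < q" "q < 1" and z: "\<bar>z\<bar> \<le> 1"
  shows "((\<lambda>n. euler_coeff q n * z ^ n) has_sum qpoch_inf (- z) q) UNIV"
  unfolding qpoch_inf_eq_euler_series[OF q z]
  by (rule norm_summable_imp_has_sum[OF euler_summable_norm[OF q z] euler_sums[OF q z]])

lemma qpoch_inf_split:
  assumes q: "0 < q" "q < 1" and z: "\<bar>z\<bar> \<le> 1"
  shows "qpoch_inf (- z) q = qpoch (- z) q n * qpoch_inf (- (q ^ n * z)) q"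
proof -
  have "\<bar>q ^ n * z\<bar> \<le> 1" using q z by (simp add: abs_mult mult_le_one power_le_one)
  then show ?thesis
    using euler_series_iter[OF q z] qpoch_inf_eq_euler_series[OF q] z by simp
qed


fun qbinom :: "real \<Rightarrow> nat \<Rightarrow> nat \<Rightarrow> real" where
  "qbinom q 0 k = (if k = 0 then 1 else 0)"
| "qbinom q (Suc n) 0 = 1"
| "qbinom q (Suc n) (Suc k) = qbinom q n k + q ^ Suc k * qbinom q n (Suc k)"

lemma qbinom_eq_0: "n < k \<Longrightarrow> qbinom q n k = 0"
proof (induction n arbitrary: k)
  case (Suc n)
  then obtain m where "k = Suc m" by (cases k) auto
  with Suc show ?case by auto
qed simp

lemma qbinom_n_0 [simp]: "qbinom q n 0 = 1" by (cases n) auto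

lemma qbinom_closed_form:
  "k \<le> n \<Longrightarrow> qbinom q n k * (qpoch q q k * qpoch q q (n - k)) = qpoch q q n"
proof (induction n arbitrary: k)
  case 0 then show ?case by simp
next
  case (Suc n)
  show ?case
  proof (cases k)
    case 0 then show ?thesis by simp
  next
    case (Suc m)
    with Suc.prems have mn: "m \<le> n" by simp
    have t1: "qbinom q n m * (qpoch q q (Suc m) * qpoch q q (n - m)) = qpoch q q n * (1 - q * q ^ m)"
      using Suc.IH[OF mn] by (simp add: qpoch_Suc algebra_simps)
    have t2: "q ^ Suc m * qbinom q n (Suc m) * (qpoch q q (Suc m) * qpoch q q (n - m))
              = q ^ Suc m * qpoch q q n * (1 - q ^ (n - m))"
    proof (cases "m = n")
      case True then show ?thesis by (simp add: qbinom_eq_0)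
    next
      case False
      then have mn': "Suc m \<le> n" using mn by simp
      then have "n - m = Suc (n - Suc m)" by simp
      then have "qpoch q q (n - m) = qpoch q q (n - Suc m) * (1 - q ^ (n - m))"
        by (simp add: qpoch_Suc)
      then have "q ^ Suc m * qbinom q n (Suc m) * (qpoch q q (Suc m) * qpoch q q (n - m))
        = q ^ Suc m * (1 - q ^ (n - m)) * (qbinom q n (Suc m) * (qpoch q q (Suc m) * qpoch q q (n - Suc m)))"
        by (simp only: ac_simps)
      also have "\<dots> = q ^ Suc m * (1 - q ^ (n - m)) * qpoch q q n"
        by (simp only: Suc.IH[OF mn'])
      finally show ?thesis by (simp only: mult_ac)
    qed
    have "q ^ Suc m * (1 - q ^ (n - m)) = q * q ^ m - q * q ^ n"
      using mn by (simp add: algebra_simps power_add[symmetric])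
    moreover have "q ^ n = q ^ m * q ^ (n - m)" using mn by (simp add: power_add[symmetric])
    ultimately have "qbinom q (Suc n) k * (qpoch q q k * qpoch q q (Suc n - k)) = qpoch q q n * (1 - q * q ^ n)"
      using Suc t1 t2 by (simp add: algebra_simps)
    then show ?thesis by (simp add: qpoch_Suc)
  qed
qed

lemma qbinom_sum_step:
  "(\<Sum>k\<le>Suc N. qbinom q (Suc N) k * q ^ tri k * v ^ k * u ^ (Suc N - k))
   = (u + v) * (\<Sum>k\<le>N. qbinom q N k * q ^ tri k * (v * q) ^ k * u ^ (N - k))"
proof -
  let ?t = "\<lambda>k. qbinom q N k * q ^ tri k * (v * q) ^ k * u ^ (N - k)"
  have low: "u * sum ?t {..N} = (\<Sum>k\<le>Suc N. qbinom q N k * q ^ tri k * q ^ k * v ^ k * u ^ (Suc N - k))"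
  proof -
    have "(\<Sum>k\<le>Suc N. qbinom q N k * q ^ tri k * q ^ k * v ^ k * u ^ (Suc N - k))
        = (\<Sum>k\<le>N. qbinom q N k * q ^ tri k * q ^ k * v ^ k * u ^ (Suc N - k))"
      by (simp add: qbinom_eq_0)
    also have "\<dots> = (\<Sum>k\<le>N. u * ?t k)"
      by (intro sum.cong refl) (simp add: Suc_diff_le power_mult_distrib algebra_simps)
    finally show ?thesis by (simp add: sum_distrib_left)
  qed
  have high: "v * sum ?t {..N} = (\<Sum>k\<le>Suc N. (if k = 0 then 0
      else qbinom q N (k - 1) * q ^ tri (k - 1) * q ^ (k - 1) * v ^ k * u ^ (Suc N - k)))"
    by (subst sum.atMost_Suc_shift) (simp add: sum_distrib_left power_mult_distrib algebra_simps)
  have pascal: "qbinom q N k * q ^ tri k * q ^ k * v ^ k * u ^ (Suc N - k)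
      + (if k = 0 then 0 else qbinom q N (k - 1) * q ^ tri (k - 1) * q ^ (k - 1) * v ^ k * u ^ (Suc N - k))
      = qbinom q (Suc N) k * q ^ tri k * v ^ k * u ^ (Suc N - k)" for k
    by (cases k) (simp_all add: power_add algebra_simps)
  show ?thesis
    unfolding distrib_right low high sum.distrib[symmetric] pascal ..
qed

lemma q_binomial_theorem:
  "(\<Prod>j<N. u + v * q ^ j) = (\<Sum>k\<le>N. qbinom q N k * q ^ tri k * v ^ k * u ^ (N - k))"
proof (induction N arbitrary: v)
  case (Suc N)
  have "(\<Prod>j<Suc N. u + v * q ^ j) = (u + v) * (\<Prod>j<N. u + (v * q) * q ^ j)"
    by (subst prod.lessThan_Suc_shift) (simp add: algebra_simps)
  then show ?case by (simp only: Suc.IH qbinom_sum_step)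
qed simp

(* The finite a-sum: for q = y^2,
     Sum_(a<=2i) y^(a^2+b^2+ab) / ((q)_a (q)_b) = y^(3i^2) (-y;q)_i^2 / (q)_(2i),  b = 2i-a.
   After clearing (q)_(2i) the left side is a q-binomial sum with u = y^(2i-1), v = 1, and the
   resulting product over j < 2i splits into two halves, each a multiple of (-y;q)_i. *)

lemma prod_lessThan_add:
  fixes f :: "nat \<Rightarrow> 'a::comm_monoid_mult"
  shows "(\<Prod>j<m + n. f j) = (\<Prod>j<m. f j) * (\<Prod>j<n. f (m + j))"
  by (induction n) (auto simp: mult_ac)

lemma prod_lessThan_reflect:
  fixes f :: "nat \<Rightarrow> 'a::comm_monoid_mult"
  shows "(\<Prod>j<n. f (n - Suc j)) = (\<Prod>j<n. f j)"
  by (rule prod.reindex_bij_witness[where i="\<lambda>j. n - Suc j" and j="\<lambda>j. n - Suc j"]) auto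

lemma prod_power_tri: "(\<Prod>j<n. (x::real) ^ j) = x ^ tri n"
  by (induction n) (auto simp: power_add)

definition gauss_exp :: "nat \<Rightarrow> nat \<Rightarrow> nat" where
  "gauss_exp i a = a\<^sup>2 + (2 * i - a)\<^sup>2 + a * (2 * i - a)"

(* Exponent bookkeeping for the q-binomial sum with u = y^(2i-1). *)
lemma gauss_exp_eq:
  assumes "a \<le> 2 * i"
  shows "2 * i + 2 * tri a + (2 * i - 1) * (2 * i - a) = gauss_exp i a"
proof -
  obtain b where b: "2 * i = a + b" using assms by (metis le_add_diff_inverse)
  have h1: "2 * tri a + a = a * a" using tri_double[of a] by (simp add: power2_eq_square)
  have e1: "2 * i - a = b" "2 * i - 1 = a + b - 1" using b by auto
  show ?thesis
  proof (cases "a + b")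
    case 0 then show ?thesis using b by (simp add: tri_def gauss_exp_def)
  next
    case (Suc s)
    have h2: "(a + b - 1) * b + b = (a + b) * b" using Suc by (simp add: algebra_simps)
    have h3: "(a + b) * b = a * b + b * b" by (simp add: algebra_simps)
    show ?thesis unfolding gauss_exp_def e1 power2_eq_square using h1 h2 h3 b by linarith
  qed
qed

lemma three_squares_eq: "2 * i + 2 * tri i + (2 * i - 1) * i = 3 * i\<^sup>2"
  using tri_double[of i] by (cases i) (simp_all add: power2_eq_square algebra_simps)

(* Lower half: y^(2i-1) + q^j = q^j (1 + y q^(i-1-j)) for j < i. *)
lemma prod_lower_half:
  fixes y :: real
  shows "(\<Prod>j<i. y ^ (2 * i - 1) + (y\<^sup>2) ^ j) = (y\<^sup>2) ^ tri i * (\<Prod>j<i. 1 + y * (y\<^sup>2) ^ j)"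
proof -
  have "y ^ (2 * i - 1) + (y\<^sup>2) ^ j = (y\<^sup>2) ^ j * (1 + y * (y\<^sup>2) ^ (i - Suc j))" if "j < i" for j
  proof -
    have "y ^ (2 * i - 1) = y ^ (2 * j + 1 + 2 * (i - Suc j))"
      using that by (intro arg_cong[where f="(^) y"]) simp
    also have "\<dots> = (y\<^sup>2) ^ j * (y * (y\<^sup>2) ^ (i - Suc j))"
      by (simp only: power_add power_mult power_one_right mult_ac) (metis power_mult mult.commute)
    finally show ?thesis by (simp add: algebra_simps)
  qed
  then have "(\<Prod>j<i. y ^ (2 * i - 1) + (y\<^sup>2) ^ j)
      = (\<Prod>j<i. (y\<^sup>2) ^ j) * (\<Prod>j<i. 1 + y * (y\<^sup>2) ^ (i - Suc j))"
    by (simp add: prod.distrib)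
  then show ?thesis
    by (simp only: prod_power_tri prod_lessThan_reflect[of "\<lambda>j. 1 + y * (y\<^sup>2) ^ j"])
qed

(* Upper half: y^(2i-1) + q^(i+j) = y^(2i-1) (1 + y q^j). *)
lemma prod_upper_half:
  fixes y :: real
  shows "(\<Prod>j<i. y ^ (2 * i - 1) + (y\<^sup>2) ^ (i + j)) = (y ^ (2 * i - 1)) ^ i * (\<Prod>j<i. 1 + y * (y\<^sup>2) ^ j)"
proof (cases i)
  case (Suc m)
  have "y ^ (2 * i - 1) + (y\<^sup>2) ^ (i + j) = y ^ (2 * i - 1) * (1 + y * (y\<^sup>2) ^ j)" for j
  proof -
    have ex: "2 * (i + j) = (2 * i - 1) + 1 + 2 * j" using Suc by simp
    have "(y\<^sup>2) ^ (i + j) = y ^ (2 * (i + j))" by (metis power_mult)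
    also have "\<dots> = y ^ (2 * i - 1) * (y * (y\<^sup>2) ^ j)"
      unfolding ex by (simp add: power_add power_mult)
    finally show ?thesis by (simp add: algebra_simps)
  qed
  then show ?thesis by (simp add: prod.distrib)
qed simp

lemma qbinomial_product_value:
  fixes y :: real
  shows "y ^ (2 * i) * (\<Prod>j<2 * i. y ^ (2 * i - 1) + (y\<^sup>2) ^ j)
       = y ^ (3 * i\<^sup>2) * (qpoch (- y) (y\<^sup>2) i)\<^sup>2"
proof -
  let ?e = "2 * i - 1"
  let ?R = "\<Prod>j<i. 1 + y * (y\<^sup>2) ^ j"
  have "(\<Prod>j<2 * i. y ^ ?e + (y\<^sup>2) ^ j)
      = (\<Prod>j<i. y ^ ?e + (y\<^sup>2) ^ j) * (\<Prod>j<i. y ^ ?e + (y\<^sup>2) ^ (i + j))"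
    using prod_lessThan_add[where m=i and n=i] by (simp add: mult_2)
  also have "\<dots> = (y\<^sup>2) ^ tri i * (y ^ ?e) ^ i * ?R\<^sup>2"
    unfolding prod_lower_half prod_upper_half by (simp add: power2_eq_square mult_ac)
  also have "\<dots> = y ^ (2 * tri i + ?e * i) * ?R\<^sup>2"
    by (simp add: power_add power_mult)
  finally have "y ^ (2 * i) * (\<Prod>j<2 * i. y ^ ?e + (y\<^sup>2) ^ j) = y ^ (2 * i + 2 * tri i + ?e * i) * ?R\<^sup>2"
    by (simp add: power_add)
  then show ?thesis by (simp only: three_squares_eq) (simp add: qpoch_def)
qed

lemma gauss_sum:
  fixes y :: real
  assumes y: "0 < y\<^sup>2" "y\<^sup>2 < 1"
  shows "(\<Sum>a\<le>2 * i. y ^ gauss_exp i a / (qpoch (y\<^sup>2) (y\<^sup>2) a * qpoch (y\<^sup>2) (y\<^sup>2) (2 * i - a)))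
       = y ^ (3 * i\<^sup>2) * (qpoch (- y) (y\<^sup>2) i)\<^sup>2 / qpoch (y\<^sup>2) (y\<^sup>2) (2 * i)"
proof -
  let ?q = "y\<^sup>2"
  let ?P = "qpoch ?q ?q"
  have Ppos: "\<And>n. 0 < ?P n" using qpoch_qq_pos[OF y] .
  have "?P (2 * i) * (y ^ gauss_exp i a / (?P a * ?P (2 * i - a)))
      = y ^ (2 * i) * (qbinom ?q (2 * i) a * ?q ^ tri a * 1 ^ a * (y ^ (2 * i - 1)) ^ (2 * i - a))"
    if "a \<le> 2 * i" for a
  proof -
    have "qbinom ?q (2 * i) a = ?P (2 * i) / (?P a * ?P (2 * i - a))"
      using qbinom_closed_form[OF that, of ?q] Ppos[of a] Ppos[of "2*i-a"] by (subst eq_divide_eq) auto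
    moreover have "(y\<^sup>2) ^ tri a = y ^ (2 * tri a)"
      "(y ^ (2 * i - 1)) ^ (2 * i - a) = y ^ ((2 * i - 1) * (2 * i - a))"
      by (metis power_mult)+
    ultimately show ?thesis
      by (simp add: gauss_exp_eq[OF that, symmetric] power_add)
  qed
  then have "?P (2 * i) * (\<Sum>a\<le>2 * i. y ^ gauss_exp i a / (?P a * ?P (2 * i - a)))
      = y ^ (2 * i) * (\<Sum>a\<le>2 * i. qbinom ?q (2 * i) a * ?q ^ tri a * 1 ^ a * (y ^ (2 * i - 1)) ^ (2 * i - a))"
    unfolding sum_distrib_left by (intro sum.cong) auto
  also have "\<dots> = y ^ (2 * i) * (\<Prod>j<2 * i. y ^ (2 * i - 1) + 1 * ?q ^ j)"
    by (simp only: q_binomial_theorem)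
  also have "\<dots> = y ^ (3 * i\<^sup>2) * (qpoch (- y) ?q i)\<^sup>2"
    using qbinomial_product_value[of y i] by simp
  finally show ?thesis using Ppos[of "2 * i"] by (simp add: field_simps)
qed

lemma has_sum_iterated_abs:
  fixes f :: "'a \<times> 'b \<Rightarrow> real"
  assumes rows: "\<And>x. ((\<lambda>b. f (x, b)) has_sum g x) UNIV"
    and norm_rows: "\<And>x. ((\<lambda>b. norm (f (x, b))) has_sum G x) UNIV"
    and g: "(g has_sum S) UNIV"
    and G: "G summable_on UNIV"
  shows "(f has_sum S) UNIV"
proof -
  have "(\<lambda>p. norm (f p)) summable_on Sigma UNIV (\<lambda>_. UNIV)"
    by (rule summable_on_SigmaI[where g = G]) (use norm_rows G in auto)
  then have "f summable_on Sigma UNIV (\<lambda>_. UNIV)"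
    using summable_on_iff_abs_summable_on_real by blast
  then have "(f has_sum S) (Sigma UNIV (\<lambda>_. UNIV))"
    by (rule has_sum_SigmaI[where g = g, rotated 2]) (use rows g in auto)
  then show ?thesis by simp
qed

definition weight_exp :: "nat \<Rightarrow> nat \<Rightarrow> nat \<Rightarrow> nat" where
  "weight_exp i a c = gauss_exp i a + c\<^sup>2 + 2 * i * c"

definition weight :: "real \<Rightarrow> nat \<times> nat \<times> nat \<Rightarrow> real" where
  "weight y p = (case p of (i, a, c) \<Rightarrow> if a \<le> 2 * i then y ^ weight_exp i a c /
      (qpoch (y\<^sup>2) (y\<^sup>2) a * qpoch (y\<^sup>2) (y\<^sup>2) (2 * i - a) * qpoch (y\<^sup>2) (y\<^sup>2) c) else 0)"

definition gauss_term :: "real \<Rightarrow> nat \<Rightarrow> nat \<Rightarrow> real" where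
  "gauss_term y i a = (if a \<le> 2 * i then
      y ^ gauss_exp i a / (qpoch (y\<^sup>2) (y\<^sup>2) a * qpoch (y\<^sup>2) (y\<^sup>2) (2 * i - a)) else 0)"

definition outer_term :: "real \<Rightarrow> nat \<Rightarrow> real" where
  "outer_term y i = qpoch (- y) (y\<^sup>2) i * y ^ (3 * i\<^sup>2) / qpoch (y\<^sup>2) (y\<^sup>2) (2 * i)"

(* Since y^(c^2 + 2ic) = q^(c(c-1)/2) (y q^i)^c, the weight factors into a Gauss term
   and an Euler term. *)
lemma weight_split:
  "weight y (i, a, c) = gauss_term y i a * (euler_coeff (y\<^sup>2) c * (y * (y\<^sup>2) ^ i) ^ c)"
proof -
  have "weight_exp i a c = gauss_exp i a + (2 * tri c + (c + 2 * (i * c)))"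
    unfolding weight_exp_def using tri_double[of c] by (simp add: algebra_simps)
  then have "y ^ weight_exp i a c = y ^ gauss_exp i a * (y ^ (2 * tri c) * (y ^ c * y ^ (2 * (i * c))))"
    by (simp only: power_add)
  also have "\<dots> = y ^ gauss_exp i a * ((y\<^sup>2) ^ tri c * (y * (y\<^sup>2) ^ i) ^ c)"
    by (simp only: power_mult power_mult_distrib)
  finally show ?thesis
    unfolding weight_def gauss_term_def euler_coeff_def by simp
qed

lemma weight_norm:
  fixes y :: real
  assumes y: "0 < y\<^sup>2" "y\<^sup>2 < 1"
  shows "norm (weight y p) = weight \<bar>y\<bar> p"
proof -
  obtain i a c where p: "p = (i, a, c)" by (cases p) auto
  have P: "\<And>n. 0 < qpoch (y\<^sup>2) (y\<^sup>2) n" using qpoch_qq_pos[OF y] .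
  show ?thesis unfolding p weight_def using P[of a] P[of "2*i-a"] P[of c]
    by (simp add: abs_mult power_abs)
qed

(* Sum over c, by Euler's identity with z = y q^i. *)
lemma weight_sum_c:
  fixes y :: real
  assumes y: "0 < y\<^sup>2" "y\<^sup>2 < 1"
  shows "((\<lambda>c. weight y (i, a, c)) has_sum gauss_term y i a * qpoch_inf (- (y * (y\<^sup>2) ^ i)) (y\<^sup>2)) UNIV"
proof -
  have "\<bar>y\<bar> < 1" using y by (simp add: abs_square_less_1)
  moreover have "(y\<^sup>2) ^ i \<le> 1" using y by (simp add: power_le_one)
  ultimately have "\<bar>y * (y\<^sup>2) ^ i\<bar> \<le> 1" using y by (simp add: abs_mult mult_le_one)
  then show ?thesis
    unfolding weight_split by (intro has_sum_cmult_right euler_has_sum y)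
qed

(* Sum over a, by the finite identity and (-y;q)_i (-y q^i;q)_inf = (-y;q)_inf. *)
lemma gauss_term_sum:
  fixes y :: real
  assumes y: "0 < y\<^sup>2" "y\<^sup>2 < 1"
  shows "((\<lambda>a. gauss_term y i a * qpoch_inf (- (y * (y\<^sup>2) ^ i)) (y\<^sup>2))
           has_sum outer_term y i * qpoch_inf (- y) (y\<^sup>2)) UNIV"
proof (rule has_sum_finite_neutralI[where B = "{..2 * i}"])
  let ?q = "y\<^sup>2"
  have "\<bar>y\<bar> \<le> 1" using y by (simp add: abs_square_less_1 less_imp_le)
  then have split: "qpoch_inf (- y) ?q = qpoch (- y) ?q i * qpoch_inf (- (y * ?q ^ i)) ?q"
    using qpoch_inf_split[OF y, of y i] by (simp add: mult.commute)
  have "(\<Sum>a\<le>2 * i. gauss_term y i a * qpoch_inf (- (y * ?q ^ i)) ?q)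
      = (\<Sum>a\<le>2 * i. y ^ gauss_exp i a / (qpoch ?q ?q a * qpoch ?q ?q (2 * i - a)))
        * qpoch_inf (- (y * ?q ^ i)) ?q"
    unfolding sum_distrib_right gauss_term_def by (intro sum.cong) auto
  also have "\<dots> = outer_term y i * qpoch_inf (- y) ?q"
    unfolding gauss_sum[OF y] split outer_term_def by (simp add: power2_eq_square mult_ac)
  finally show "outer_term y i * qpoch_inf (- y) ?q
      = (\<Sum>a\<le>2 * i. gauss_term y i a * qpoch_inf (- (y * ?q ^ i)) ?q)" ..
qed (auto simp: gauss_term_def)

lemma weight_sum_row:
  fixes y :: real
  assumes y: "0 < y\<^sup>2" "y\<^sup>2 < 1"
  shows "((\<lambda>p. weight y (i, p)) has_sum outer_term y i * qpoch_inf (- y) (y\<^sup>2)) UNIV"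
proof -
  have y': "0 < \<bar>y\<bar>\<^sup>2" "\<bar>y\<bar>\<^sup>2 < 1" using y by simp_all
  have "((\<lambda>c. norm (weight y (i, a, c)))
           has_sum gauss_term \<bar>y\<bar> i a * qpoch_inf (- (\<bar>y\<bar> * (\<bar>y\<bar>\<^sup>2) ^ i)) (\<bar>y\<bar>\<^sup>2)) UNIV" for a
    using weight_sum_c[OF y'] by (simp only: weight_norm[OF y])
  then show ?thesis
    using has_sum_iterated_abs[OF weight_sum_c[OF y] _ gauss_term_sum[OF y]
        has_sum_imp_summable[OF gauss_term_sum[OF y']]]
    by blast
qed

lemma outer_term_bound:
  fixes y :: real
  assumes y: "0 < y\<^sup>2" "y\<^sup>2 < 1"
  shows "norm (outer_term y i) \<le> (y\<^sup>2) ^ tri i * (2 * (1 / (1 - y\<^sup>2))\<^sup>2) ^ i"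
proof -
  let ?q = "y\<^sup>2"
  have ay: "\<bar>y\<bar> < 1" using y by (simp add: abs_square_less_1)
  have P: "0 < qpoch ?q ?q (2*i)" using qpoch_qq_pos[OF y] .
  have "\<bar>qpoch (- y) ?q i\<bar> = (\<Prod>j<i. \<bar>1 + y * ?q ^ j\<bar>)"
    unfolding qpoch_def by (simp add: abs_prod)
  also have "\<dots> \<le> (\<Prod>j<i. 2)"
  proof (rule prod_mono)
    fix j
    have "\<bar>y * ?q ^ j\<bar> \<le> 1" using ay y by (simp add: abs_mult mult_le_one power_le_one)
    then show "0 \<le> \<bar>1 + y * ?q ^ j\<bar> \<and> \<bar>1 + y * ?q ^ j\<bar> \<le> 2" by linarith
  qed
  finally have b1: "\<bar>qpoch (- y) ?q i\<bar> \<le> 2 ^ i" by simp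
  have "\<bar>y\<bar> ^ (3 * i\<^sup>2) \<le> \<bar>y\<bar> ^ (2 * tri i)"
    using ay tri_double[of i] by (intro power_decreasing) auto
  then have b2: "\<bar>y\<bar> ^ (3 * i\<^sup>2) \<le> ?q ^ tri i" by (simp add: power_mult)
  have b3: "1 / qpoch ?q ?q (2*i) \<le> ((1 / (1 - ?q))\<^sup>2) ^ i"
    using qpoch_qq_lower[OF y, of "2*i"] P y
    by (simp add: power_divide divide_left_mono flip: power_mult)
  have "norm (outer_term y i) = \<bar>qpoch (- y) ?q i\<bar> * \<bar>y\<bar> ^ (3 * i\<^sup>2) * (1 / qpoch ?q ?q (2*i))"
    unfolding outer_term_def using P by (simp add: abs_mult power_abs)
  also have "\<dots> \<le> 2 ^ i * ?q ^ tri i * ((1 / (1 - ?q))\<^sup>2) ^ i"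
    using b1 b2 b3 P by (intro mult_mono) auto
  also have "\<dots> = ?q ^ tri i * (2 * (1 / (1 - ?q))\<^sup>2) ^ i"
    by (simp only: power_mult_distrib mult_ac)
  finally show ?thesis .
qed

lemma outer_term_has_sum:
  fixes y :: real
  assumes y: "0 < y\<^sup>2" "y\<^sup>2 < 1"
  shows "((\<lambda>i. outer_term y i * C) has_sum (\<Sum>i. outer_term y i) * C) UNIV"
proof -
  have summable: "summable (\<lambda>i. norm (outer_term y i))"
    by (rule summable_comparison_test[OF _ summable_tri_geom[OF y, of "2 * (1 / (1 - y\<^sup>2))\<^sup>2"]])
       (use outer_term_bound[OF y] in auto)
  show ?thesis
  proof (rule norm_summable_imp_has_sum)
    show "summable (\<lambda>i. norm (outer_term y i * C))"
      using summable_mult2[OF summable, of "norm C"] by (simp add: abs_mult)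
    show "(\<lambda>i. outer_term y i * C) sums ((\<Sum>i. outer_term y i) * C)"
      by (intro sums_mult2 summable_sums summable_norm_cancel[OF summable])
  qed
qed

lemma weight_has_sum:
  fixes y :: real
  assumes y: "0 < y\<^sup>2" "y\<^sup>2 < 1"
  shows "(weight y has_sum (\<Sum>i. outer_term y i) * qpoch_inf (- y) (y\<^sup>2)) UNIV"
proof -
  have y': "0 < \<bar>y\<bar>\<^sup>2" "\<bar>y\<bar>\<^sup>2 < 1" using y by simp_all
  have "((\<lambda>p. norm (weight y (i, p))) has_sum outer_term \<bar>y\<bar> i * qpoch_inf (- \<bar>y\<bar>) (\<bar>y\<bar>\<^sup>2)) UNIV" for i
    using weight_sum_row[OF y'] by (simp only: weight_norm[OF y])
  then show ?thesis
    using has_sum_iterated_abs[where f = "weight y", OF weight_sum_row[OF y] _ outer_term_has_sum[OF y]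
        has_sum_imp_summable[OF outer_term_has_sum[OF y']]]
    by blast
qed

definition triple_term :: "real \<Rightarrow> nat \<times> nat \<times> nat \<Rightarrow> real" where
  "triple_term q = (\<lambda>(i::nat, j::nat, k::nat).
      q ^ (i\<^sup>2 + j\<^sup>2 + k\<^sup>2)
      * qinv q (int i + int j - int k)
      * qinv q (int i + int k - int j)
      * qinv q (int j + int k - int i))"

definition triangle :: "(nat \<times> nat \<times> nat) set" where
  "triangle = {(i, j, k). k \<le> i + j \<and> j \<le> i + k \<and> i \<le> j + k}"

definition even_part :: "(nat \<times> nat \<times> nat) set" where
  "even_part = {(i, a, c). a \<le> 2 * i \<and> even (a + c)}"

definition to_weight_coords :: "nat \<times> nat \<times> nat \<Rightarrow> nat \<times> nat \<times> nat" where
  "to_weight_coords = (\<lambda>(i, j, k). (i, i + j - k, j + k - i))"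

lemma bij_to_weight_coords: "bij_betw to_weight_coords triangle even_part"
proof (rule bij_betw_byWitness[where f' = "\<lambda>(i, a, c). (i, (a + c) div 2, (2 * i - a + c) div 2)"])
  have "to_weight_coords (i, (a + c) div 2, (2 * i - a + c) div 2) = (i, a, c)
      \<and> (i, (a + c) div 2, (2 * i - a + c) div 2) \<in> triangle"
    if "a \<le> 2 * i" "a + c = 2 * m" for i a c m
    using that by (auto simp: triangle_def to_weight_coords_def)
  then show "\<forall>b \<in> even_part. to_weight_coords ((\<lambda>(i, a, c). (i, (a + c) div 2, (2 * i - a + c) div 2)) b) = b"
    "(\<lambda>(i, a, c). (i, (a + c) div 2, (2 * i - a + c) div 2)) ` even_part \<subseteq> triangle"
    unfolding even_part_def by (auto elim!: evenE)
qed (auto simp: even_part_def triangle_def to_weight_coords_def)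

lemma weight_exp_triangle:
  assumes "k \<le> i + j" "j \<le> i + k" "i \<le> j + k"
  shows "weight_exp i (i + j - k) (j + k - i) = 2 * (i\<^sup>2 + j\<^sup>2 + k\<^sup>2)"
proof -
  have e: "2 * i - (i + j - k) = i + k - j" using assms by simp
  have ha: "int (i + j - k) = int i + int j - int k" and hb: "int (i + k - j) = int i + int k - int j"
    and hc: "int (j + k - i) = int j + int k - int i" using assms by (simp_all add: of_nat_diff)
  have "int (weight_exp i (i + j - k) (j + k - i)) = int (2 * (i\<^sup>2 + j\<^sup>2 + k\<^sup>2))"
    unfolding weight_exp_def gauss_exp_def e
    by (simp only: of_nat_add of_nat_mult of_nat_power ha hb hc of_nat_numeral)
       (simp add: power2_eq_square algebra_simps)
  then show ?thesis by (simp only: of_nat_eq_iff)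
qed

lemma weight_exp_parity:
  assumes "a \<le> 2 * i"
  shows "even (weight_exp i a c) \<longleftrightarrow> even (a + c)"
proof -
  have "even (2 * i - a) \<longleftrightarrow> even a" using assms by (simp add: even_diff_nat)
  then show ?thesis unfolding weight_exp_def gauss_exp_def by (auto simp: even_mult_iff)
qed

lemma weight_on_triangle:
  fixes y :: real
  assumes q: "y\<^sup>2 = q" and "p \<in> triangle"
  shows "weight y (to_weight_coords p) = triple_term q p"
proof -
  obtain i j k where p: "p = (i, j, k)" and S: "k \<le> i + j" "j \<le> i + k" "i \<le> j + k"
    using assms(2) unfolding triangle_def by auto
  have exp: "y ^ weight_exp i (i + j - k) (j + k - i) = q ^ (i\<^sup>2 + j\<^sup>2 + k\<^sup>2)"
    unfolding weight_exp_triangle[OF S] power_mult q ..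
  have le: "i + j - k \<le> 2 * i" and diff: "2 * i - (i + j - k) = i + k - j" using S by auto
  have "weight y (to_weight_coords p) = weight y (i, i + j - k, j + k - i)"
    by (simp add: p to_weight_coords_def)
  also have "\<dots> = y ^ weight_exp i (i + j - k) (j + k - i) / (qpoch (y\<^sup>2) (y\<^sup>2) (i + j - k)
      * qpoch (y\<^sup>2) (y\<^sup>2) (2 * i - (i + j - k)) * qpoch (y\<^sup>2) (y\<^sup>2) (j + k - i))"
    using le by (simp add: weight_def)
  finally have weight_value: "weight y (to_weight_coords p)
      = q ^ (i\<^sup>2 + j\<^sup>2 + k\<^sup>2) / (qpoch q q (i + j - k) * qpoch q q (i + k - j) * qpoch q q (j + k - i))"
    unfolding exp diff q .
  have "nat (int i + int j - int k) = i + j - k" "nat (int i + int k - int j) = i + k - j"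
    "nat (int j + int k - int i) = j + k - i" using S by auto
  then have triple_value: "triple_term q p
      = q ^ (i\<^sup>2 + j\<^sup>2 + k\<^sup>2) / (qpoch q q (i + j - k) * qpoch q q (i + k - j) * qpoch q q (j + k - i))"
    unfolding p triple_term_def qinv_def using S by simp
  show ?thesis unfolding weight_value triple_value ..
qed

lemma triple_term_outside_triangle:
  assumes "p \<notin> triangle"
  shows "triple_term q p = 0"
proof -
  obtain i j k where p: "p = (i, j, k)" by (cases p) auto
  consider "int i + int j - int k < 0" | "int i + int k - int j < 0" | "int j + int k - int i < 0"
    using assms unfolding p triangle_def by fastforce
  then show ?thesis by cases (simp_all add: p triple_term_def qinv_def)
qed

(* Averaging over y and -y keeps exactly the weights with a + c even, since E has the
   parity of a + c. *)
lemma weight_sign_average: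
  "(weight y p + weight (- y) p) / 2 = (if p \<in> even_part then weight y p else 0)"
proof -
  obtain i a c where p: "p = (i, a, c)" by (cases p) auto
  show ?thesis
  proof (cases "a \<le> 2 * i")
    case True
    have neg: "weight (- y) p = (-1) ^ weight_exp i a c * weight y p"
      unfolding p weight_def by (simp add: power_minus[of y])
    show ?thesis
    proof (cases "even (a + c)")
      case True
      with \<open>a \<le> 2 * i\<close> have "weight (- y) p = weight y p" "p \<in> even_part"
        using neg weight_exp_parity by (simp_all add: p even_part_def)
      then show ?thesis by simp
    next
      case False
      with \<open>a \<le> 2 * i\<close> have "weight (- y) p = - weight y p" "p \<notin> even_part"
        using neg weight_exp_parity by (simp_all add: p even_part_def)
      then show ?thesis by simp
    qed
  next
    case False
    then show ?thesis unfolding p weight_def even_part_def by simp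
  qed
qed

lemma triple_sum_from_weights:
  fixes y :: real
  assumes q: "y\<^sup>2 = q"
    and plus: "(weight y has_sum s) UNIV" and minus: "(weight (- y) has_sum t) UNIV"
  shows "(triple_term q has_sum (s + t) / 2) UNIV"
proof -
  have "((\<lambda>p. (weight y p + weight (- y) p) / 2) has_sum (s + t) / 2) UNIV"
    by (intro has_sum_divide_const has_sum_add plus minus)
  then have "(weight y has_sum (s + t) / 2) even_part"
    by (subst (asm) has_sum_cong_neutral[where T = even_part and g = "weight y"])
       (auto simp: weight_sign_average)
  then have "((\<lambda>p. weight y (to_weight_coords p)) has_sum (s + t) / 2) triangle"
    by (simp add: has_sum_reindex_bij_betw[OF bij_to_weight_coords])
  then have "(triple_term q has_sum (s + t) / 2) triangle"
    by (subst (asm) has_sum_cong[where g = "triple_term q"]) (auto simp: weight_on_triangle q)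
  then show ?thesis
    by (subst (asm) has_sum_cong_neutral[where T = UNIV and g = "triple_term q"])
       (auto simp: triple_term_outside_triangle)
qed

lemma neg_one_power_three_squares: "(-1::real) ^ (3 * i\<^sup>2) = (-1) ^ i"
  by (cases "even i") (auto simp: even_mult_iff)

theorem mainTheorem19:
  fixes q :: real
  assumes "0 < q" "q < 1"
  shows "((\<lambda>(i::nat, j::nat, k::nat).
            q ^ (i\<^sup>2 + j\<^sup>2 + k\<^sup>2)
            * qinv q (int i + int j - int k)
            * qinv q (int i + int k - int j)
            * qinv q (int j + int k - int i))
         has_sum
          (1/2 * qpoch_inf (- sqrt q) q
               * (\<Sum>i. qpoch (- sqrt q) q i * sqrt q ^ (3 * i\<^sup>2) / qpoch q q (2 * i))
         + 1/2 * qpoch_inf (sqrt q) q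
               * (\<Sum>i. qpoch (sqrt q) q i * sqrt q ^ (3 * i\<^sup>2) * (-1) ^ i / qpoch q q (2 * i))))
         UNIV"
proof -
  define x where "x = sqrt q"
  have x2: "x\<^sup>2 = q" using assms by (simp add: x_def)
  have x: "0 < x\<^sup>2" "x\<^sup>2 < 1" and mx: "0 < (- x)\<^sup>2" "(- x)\<^sup>2 < 1" using assms x2 by auto
  have plus: "outer_term x = (\<lambda>i. qpoch (- x) q i * x ^ (3 * i\<^sup>2) / qpoch q q (2 * i))"
    unfolding outer_term_def x2 ..
  have minus: "outer_term (- x) = (\<lambda>i. qpoch x q i * x ^ (3 * i\<^sup>2) * (-1) ^ i / qpoch q q (2 * i))"
    unfolding outer_term_def using x2 by (auto simp: power_minus[of x] neg_one_power_three_squares mult_ac)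
  have "((\<Sum>i. outer_term x i) * qpoch_inf (- x) q + (\<Sum>i. outer_term (- x) i) * qpoch_inf (- (- x)) q) / 2
      = 1/2 * qpoch_inf (- x) q * (\<Sum>i. qpoch (- x) q i * x ^ (3 * i\<^sup>2) / qpoch q q (2 * i))
        + 1/2 * qpoch_inf x q * (\<Sum>i. qpoch x q i * x ^ (3 * i\<^sup>2) * (-1) ^ i / qpoch q q (2 * i))"
    (is "_ = ?value")
    unfolding plus minus by simp
  moreover have "(triple_term q has_sum ((\<Sum>i. outer_term x i) * qpoch_inf (- x) q
                               + (\<Sum>i. outer_term (- x) i) * qpoch_inf (- (- x)) q) / 2) UNIV"
    using triple_sum_from_weights[OF x2 weight_has_sum[OF x] weight_has_sum[OF mx]] x2 by simp
  ultimately have "(triple_term q has_sum ?value) UNIV" by (simp only:)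
  then show ?thesis unfolding triple_term_def x_def .
qed

end
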